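(* Let $\mathcal{G}$ be a compact group with normalized Haar measure and let $g\mapsto V_g$, $g\mapsto\tilde V_g$ be unitary representations of $\mathcal{G}$ on $\mathbb{C}^d$. Let $G=\{\overline{V_g}\otimes\tilde V_g: g\in\mathcal{G}\}$ and $G'=\{X\in\mathcal{M}_{d^2}: [X,Y]=0\ \forall Y\in G\}$. Let $|\Omega\rangle=d^{-1/2}\sum_j|j,j\rangle$, $\mathcal{S}=\{\rho\in\mathcal{M}_{d^2}:\rho\ge0,\ \operatorname{tr}_1\rho=\operatorname{tr}_2\rho=\mathbb{1}/d\}$, $\mathcal{U}=\mathrm{conv}\{(\mathbb{1}\otimes U)|\Omega\rangle\langle\Omega|(\mathbb{1}\otimes U^\dagger): U\text{ unitary}\}$, and $\mathcal{W}=\{W\in\mathcal{M}_{d^2}: W=W^\dagger,\ \operatorname{tr}[W\sigma]\ge0\ \forall\sigma\in\mathcal{U}\}$. Let $\rho\in\mathcal{S}\cap G'$. Then $\rho\in\mathcal{U}$ if and only if $\operatorname{tr}[W\rho]\ge0$ for all $W\in\mathcal{W}\cap G'$. Moreover, $$\inf\{\alpha_p+\alpha_n: \rho=\alpha_p\sigma_p-\alpha_n\sigma_n,\ \alpha_{p,n}\ge0,\ \sigma_{p,n}\in\mathcal{U}\}=\inf\{\alpha_p+\alpha_n: \rho=\alpha_p\sigma_p-\alpha_n\sigma_n,\ \alpha_{p,n}\ge0,\ \sigma_{p,n}\in\mathcal{U}\cap G'\},$$ and the same equality holds with $\alpha_p+\alpha_n$ replaced by $\alpha_n$ in both infima.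
   Context: The condition $\rho_T\in G'$ for the Jamiolkowski state $\rho_T=(\mathrm{id}\otimes T)(|\Omega\rangle\langle\Omega|)$ is equivalent to covariance of the channel $T$: $T(V_g\,\cdot\,V_g^\dagger)=\tilde V_gT(\cdot)\tilde V_g^\dagger$ for all $g$. $\overline{V_g}$ denotes the entrywise complex conjugate. *)

theory Defs
  imports "HOL-Analysis.Analysis" "HOL-Library.Complex_Order"
begin

definition compact_group ::
  "'g topology \<Rightarrow> ('g \<Rightarrow> 'g \<Rightarrow> 'g) \<Rightarrow> 'g \<Rightarrow> ('g \<Rightarrow> 'g) \<Rightarrow> bool" where
  "compact_group T mul e ginv \<longleftrightarrow>
     e \<in> topspace T \<and>
     (\<forall>x\<in>topspace T. \<forall>y\<in>topspace T. mul x y \<in> topspace T) \<and>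
     (\<forall>x\<in>topspace T. ginv x \<in> topspace T) \<and>
     (\<forall>x\<in>topspace T. \<forall>y\<in>topspace T. \<forall>z\<in>topspace T. mul (mul x y) z = mul x (mul y z)) \<and>
     (\<forall>x\<in>topspace T. mul e x = x \<and> mul x e = x) \<and>
     (\<forall>x\<in>topspace T. mul (ginv x) x = e \<and> mul x (ginv x) = e) \<and>
     continuous_map (prod_topology T T) T (\<lambda>(x, y). mul x y) \<and>
     continuous_map T T ginv \<and>
     compact_space T \<and> Hausdorff_space T"

definition cadj :: "complex^'m^'n \<Rightarrow> complex^'n^'m" where
  "cadj A = (\<chi> i j. cnj (A $ j $ i))"

definition cconj :: "complex^'m^'n \<Rightarrow> complex^'m^'n" where
  "cconj A = (\<chi> i j. cnj (A $ i $ j))"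

definition unitary_mat :: "complex^'n^'n \<Rightarrow> bool" where
  "unitary_mat U \<longleftrightarrow> cadj U ** U = mat 1 \<and> U ** cadj U = mat 1"

definition hermitian :: "complex^'n^'n \<Rightarrow> bool" where
  "hermitian A \<longleftrightarrow> cadj A = A"

text \<open>Positive semidefinite: all expectation values are nonnegative reals
  (order on complex numbers from HOL-Library.Complex_Order).\<close>
definition psd :: "complex^'n^'n \<Rightarrow> bool" where
  "psd A \<longleftrightarrow> (\<forall>x :: complex^'n. 0 \<le> (\<Sum>i\<in>UNIV. \<Sum>j\<in>UNIV. cnj (x $ i) * A $ i $ j * x $ j))"

definition unitary_rep ::
  "'g topology \<Rightarrow> ('g \<Rightarrow> 'g \<Rightarrow> 'g) \<Rightarrow> ('g \<Rightarrow> complex^'n^'n) \<Rightarrow> bool" where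
  "unitary_rep T mul V \<longleftrightarrow>
     (\<forall>g\<in>topspace T. unitary_mat (V g)) \<and>
     (\<forall>g\<in>topspace T. \<forall>h\<in>topspace T. V (mul g h) = V g ** V h) \<and>
     continuous_map T euclidean V"

text \<open>Kronecker product A \<otimes> B, first tensor factor = first index component.\<close>
definition kron :: "complex^'n^'n \<Rightarrow> complex^'n^'n \<Rightarrow> complex^('n \<times> 'n)^('n \<times> 'n)" where
  "kron A B = (\<chi> p q. A $ fst p $ fst q * B $ snd p $ snd q)"

definition ptr1 :: "complex^('n \<times> 'n)^('n \<times> 'n) \<Rightarrow> complex^'n^'n" where
  "ptr1 \<rho> = (\<chi> j l. \<Sum>i\<in>UNIV. \<rho> $ (i, j) $ (i, l))"

definition ptr2 :: "complex^('n \<times> 'n)^('n \<times> 'n) \<Rightarrow> complex^'n^'n" where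
  "ptr2 \<rho> = (\<chi> i k. \<Sum>j\<in>UNIV. \<rho> $ (i, j) $ (k, j))"

definition Omega :: "complex^('n::finite \<times> 'n)" where
  "Omega = (\<chi> p. if fst p = snd p then complex_of_real (1 / sqrt (real CARD('n))) else 0)"

definition proj :: "complex^'m \<Rightarrow> complex^'m^'m" where
  "proj v = (\<chi> a b. v $ a * cnj (v $ b))"

definition Sset :: "(complex^('n::finite \<times> 'n)^('n \<times> 'n)) set" where
  "Sset = {\<rho>. psd \<rho> \<and> ptr1 \<rho> = mat (1 / of_nat CARD('n)) \<and>
                  ptr2 \<rho> = mat (1 / of_nat CARD('n))}"

definition Uset :: "(complex^('n::finite \<times> 'n)^('n \<times> 'n)) set" where
  "Uset = convex hull
     {kron (mat 1) U ** proj Omega ** kron (mat 1) (cadj U) | U. unitary_mat U}"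

definition Wset :: "(complex^('n::finite \<times> 'n)^('n \<times> 'n)) set" where
  "Wset = {W. hermitian W \<and> (\<forall>\<sigma>\<in>(Uset :: (complex^('n \<times> 'n)^('n \<times> 'n)) set).
                                  0 \<le> trace (W ** \<sigma>))}"

definition Gset :: "'g topology \<Rightarrow> ('g \<Rightarrow> complex^'n^'n) \<Rightarrow> ('g \<Rightarrow> complex^'n^'n)
    \<Rightarrow> (complex^('n \<times> 'n)^('n \<times> 'n)) set" where
  "Gset T V Vt = {kron (cconj (V g)) (Vt g) | g. g \<in> topspace T}"

definition commutant :: "(complex^'m^'m) set \<Rightarrow> (complex^'m^'m) set" where
  "commutant G = {X. \<forall>Y\<in>G. X ** Y = Y ** X}"

end

theory Submission
  imports Defs
begin

text \<open>
  A matrix lies in the commutant \<open>G'\<close> iff it is fixed by the conjugations \<open>X \<mapsto> Y X Y\<^sup>\<dagger>\<close>,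
  \<open>Y \<in> G\<close>. These conjugations are isometries for the Frobenius norm, and since every
  \<open>Y \<in> G\<close> has the form \<open>conj A \<otimes> B\<close> with \<open>A, B\<close> unitary and
  \<open>(conj A \<otimes> B)|\<Omega>\<rangle> = (1 \<otimes> B A\<^sup>\<dagger>)|\<Omega>\<rangle>\<close>, they map \<open>\<U>\<close> into itself.
  Hence every closed convex set defined invariantly from \<open>\<U>\<close> and \<open>\<rho> \<in> G'\<close> is invariant, and
  its unique point of minimal norm is a common fixed point, i.e. lies in \<open>G'\<close>. Applied to the
  decompositions \<open>\<rho> = \<alpha>\<^sub>p \<sigma>\<^sub>p - \<alpha>\<^sub>n \<sigma>\<^sub>n\<close> with fixed weights this gives the equality
  of the infima; applied to the witnesses \<open>W\<close> with a fixed value of \<open>tr[W\<rho>]\<close>, starting from a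
  hyperplane separating \<open>\<rho> \<notin> \<U>\<close> from \<open>\<U>\<close>, it gives the criterion for membership.
\<close>

lemma sum_UNIV_pair:
  "sum f (UNIV :: ('a::finite \<times> 'b::finite) set) = (\<Sum>i\<in>UNIV. \<Sum>j\<in>UNIV. f (i, j))"
  by (simp flip: UNIV_Times_UNIV add: sum.cartesian_product)

lemma if_zero_mult: "(if P then x else 0) * y = (if P then x * y else (0::'a::mult_zero))"
  by simp

lemma mult_if_zero: "x * (if P then y else 0) = (if P then x * y else (0::'a::mult_zero))"
  by simp

lemma cnj_if_zero: "cnj (if P then x else 0) = (if P then cnj x else 0)"
  by simp

lemma matrix_add_rdistrib: "(A + B) ** C = A ** C + B ** (C :: 'a::semiring_1^'k^'m)"
  by (simp add: vec_eq_iff matrix_matrix_mult_def sum.distrib algebra_simps)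

lemma matrix_diff_rdistrib: "(A - B) ** C = A ** C - B ** (C :: 'a::ring_1^'k^'m)"
  by (simp add: vec_eq_iff matrix_matrix_mult_def sum_subtractf algebra_simps)

lemma matrix_diff_ldistrib: "C ** (A - B) = C ** A - C ** (B :: 'a::ring_1^'k^'m)"
  by (simp add: vec_eq_iff matrix_matrix_mult_def sum_subtractf algebra_simps)

lemma trace_scaleR: "trace (r *\<^sub>R (X :: complex^'n^'n)) = r *\<^sub>R trace X"
  by (simp add: trace_def scaleR_sum_right)

lemma trace_scaleR_left_mult:
  "trace ((r *\<^sub>R X) ** Y) = r *\<^sub>R trace (X ** (Y :: complex^'n^'n))"
  by (simp flip: scalar_matrix_assoc add: trace_scaleR)

lemma continuous_on_matrix_mult [continuous_intros]:
  fixes f :: "'a::topological_space \<Rightarrow> complex^'k^'m" and g :: "'a \<Rightarrow> complex^'l^'k"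
  assumes "continuous_on S f" "continuous_on S g"
  shows "continuous_on S (\<lambda>x. f x ** g x)"
  unfolding matrix_matrix_mult_def by (intro continuous_intros assms)

lemma continuous_on_cadj [continuous_intros]:
  fixes f :: "'a::topological_space \<Rightarrow> complex^'k^'m"
  assumes "continuous_on S f"
  shows "continuous_on S (\<lambda>x. cadj (f x))"
  unfolding cadj_def by (intro continuous_intros assms)

lemma cadj_mult: "cadj (A ** B) = cadj B ** cadj A"
  by (simp add: vec_eq_iff cadj_def matrix_matrix_mult_def mult.commute)

lemma cadj_cadj [simp]: "cadj (cadj A) = A"
  by (simp add: vec_eq_iff cadj_def)

lemma cadj_mat1 [simp]: "cadj (mat 1 :: complex^'n^'n) = mat 1"
  by (simp add: vec_eq_iff cadj_def mat_def)

lemma cadj_add: "cadj (A + B) = cadj A + cadj B"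
  by (simp add: vec_eq_iff cadj_def)

lemma cadj_diff: "cadj (A - B) = cadj A - cadj B"
  by (simp add: vec_eq_iff cadj_def)

lemma cadj_scaleR: "cadj (r *\<^sub>R A) = r *\<^sub>R cadj A"
  by (simp add: vec_eq_iff cadj_def)

lemma cconj_mult: "cconj (A ** B) = cconj A ** cconj B"
  by (simp add: vec_eq_iff cconj_def matrix_matrix_mult_def)

lemma cadj_cconj: "cadj (cconj A) = cconj (cadj A)"
  by (simp add: vec_eq_iff cconj_def cadj_def)

lemma cconj_mat1 [simp]: "cconj (mat 1 :: complex^'n^'n) = mat 1"
  by (simp add: vec_eq_iff cconj_def mat_def)

lemma kron_mult: "kron A B ** kron C D = kron (A ** C) (B ** D)"
  by (simp add: vec_eq_iff kron_def matrix_matrix_mult_def sum_UNIV_pair sum_product algebra_simps)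

lemma cadj_kron: "cadj (kron A B) = kron (cadj A) (cadj B)"
  by (simp add: vec_eq_iff cadj_def kron_def)

lemma kron_mat1: "kron (mat 1) (mat 1) = (mat 1 :: complex^('n::finite \<times> 'n)^('n \<times> 'n))"
  by (simp add: vec_eq_iff kron_def mat_def prod_eq_iff)

lemma unitary_mat1: "unitary_mat (mat 1)"
  unfolding unitary_mat_def by simp

lemma unitary_mult: "unitary_mat A \<Longrightarrow> unitary_mat B \<Longrightarrow> unitary_mat (A ** B)"
  unfolding unitary_mat_def cadj_mult by (metis matrix_mul_assoc matrix_mul_lid)

lemma unitary_cadj: "unitary_mat A \<Longrightarrow> unitary_mat (cadj A)"
  unfolding unitary_mat_def by simp

lemma unitary_cconj: "unitary_mat A \<Longrightarrow> unitary_mat (cconj A)"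
  unfolding unitary_mat_def by (simp add: cadj_cconj flip: cconj_mult)

lemma unitary_kron: "unitary_mat A \<Longrightarrow> unitary_mat B \<Longrightarrow> unitary_mat (kron A B)"
  unfolding unitary_mat_def by (simp add: cadj_kron kron_mult kron_mat1)

text \<open>The transpose trick \<open>(A \<otimes> 1)|\<Omega>\<rangle> = (1 \<otimes> A\<^sup>T)|\<Omega>\<rangle>\<close>, with \<open>conj A\<close> in place of \<open>A\<close>.\<close>
lemma kron_cconj_mult_Omega:
  "kron (cconj A) B *v Omega = kron (mat 1) (B ** cadj A) *v (Omega :: complex^('n::finite \<times> 'n))"
proof -
  define c where "c = complex_of_real (1 / sqrt (real CARD('n)))"
  have "(kron (cconj A) B *v Omega) $ (i, j) = (\<Sum>k\<in>UNIV. cconj A $ i $ k * B $ j $ k * c)"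
    and "(kron (mat 1) (B ** cadj A) *v (Omega :: complex^('n \<times> 'n))) $ (i, j) = (B ** cadj A) $ j $ i * c"
    for i j
    unfolding matrix_vector_mult_def kron_def Omega_def c_def mat_def
    by (simp_all add: sum_UNIV_pair mult_if_zero if_zero_mult divide_inverse)
  then show ?thesis
    by (simp add: vec_eq_iff matrix_matrix_mult_def cadj_def cconj_def sum_distrib_left
        mult.commute mult.left_commute)
qed

definition sandwich :: "complex^'m^'n \<Rightarrow> complex^'m^'m \<Rightarrow> complex^'n^'n" where
  "sandwich Y X = Y ** X ** cadj Y"

lemma sandwich_diff: "sandwich Y (A - B) = sandwich Y A - sandwich Y B"
  by (simp add: sandwich_def matrix_diff_ldistrib matrix_diff_rdistrib)

lemma sandwich_scaleR: "sandwich Y (r *\<^sub>R A) = r *\<^sub>R sandwich Y A"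
  by (simp add: sandwich_def matrix_scalar_ac flip: scalar_matrix_assoc)

lemma linear_sandwich: "linear (sandwich Y)"
proof (rule linearI)
  show "sandwich Y (A + B) = sandwich Y A + sandwich Y B" for A B
    by (simp add: sandwich_def matrix_add_ldistrib matrix_add_rdistrib)
qed (rule sandwich_scaleR)

lemma proj_matrix_vector_mult: "proj (M *v v) = sandwich M (proj v)"
  unfolding vec_eq_iff proj_def sandwich_def matrix_matrix_mult_def matrix_vector_mult_def cadj_def
  by (simp add: sum_distrib_left sum_distrib_right) (simp add: algebra_simps)

lemma hermitian_proj: "hermitian (proj v)"
  by (simp add: hermitian_def proj_def cadj_def vec_eq_iff mult.commute)

lemma hermitian_sandwich: "hermitian X \<Longrightarrow> hermitian (sandwich Y X)"
  unfolding hermitian_def sandwich_def by (simp add: cadj_mult matrix_mul_assoc)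

lemma trace_sandwich_mult: "trace (sandwich Y W ** \<sigma>) = trace (W ** sandwich (cadj Y) \<sigma>)"
proof -
  have "trace (sandwich Y W ** \<sigma>) = trace ((Y ** W) ** (cadj Y ** \<sigma>))"
    by (simp add: sandwich_def matrix_mul_assoc)
  also have "\<dots> = trace ((cadj Y ** \<sigma>) ** (Y ** W))"
    by (rule trace_mul_sym)
  also have "\<dots> = trace (W ** sandwich (cadj Y) \<sigma>)"
    by (metis sandwich_def cadj_cadj matrix_mul_assoc trace_mul_sym)
  finally show ?thesis .
qed

lemma trace_sandwich_unitary: "unitary_mat Y \<Longrightarrow> trace (sandwich Y X) = trace X"
  unfolding sandwich_def unitary_mat_def by (metis trace_mul_sym matrix_mul_assoc matrix_mul_lid)

lemma sandwich_unitary_fixed_iff: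
  assumes "unitary_mat Y" shows "sandwich Y X = X \<longleftrightarrow> X ** Y = Y ** X"
proof
  assume "sandwich Y X = X"
  then have "Y ** X ** cadj Y ** Y = X ** Y" by (simp add: sandwich_def)
  then show "X ** Y = Y ** X"
    using assms by (simp add: unitary_mat_def flip: matrix_mul_assoc)
next
  assume "X ** Y = Y ** X"
  then show "sandwich Y X = X"
    using assms by (simp add: sandwich_def unitary_mat_def) (metis matrix_mul_assoc matrix_mul_rid)
qed

lemma sandwich_cadj_fixed:
  assumes "unitary_mat Y" "sandwich Y X = X" shows "sandwich (cadj Y) X = X"
proof -
  have "X ** Y = Y ** X" using sandwich_unitary_fixed_iff assms by blast
  then have "cadj Y ** X ** Y = X"
    using assms(1) unfolding unitary_mat_def by (metis matrix_mul_assoc matrix_mul_lid)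
  then show ?thesis by (simp add: sandwich_def)
qed

lemma of_real_norm_square_matrix:
  "complex_of_real ((norm (X :: complex^'m^'k))\<^sup>2) = trace (cadj X ** X)"
proof -
  have "complex_of_real ((norm X)\<^sup>2) = (\<Sum>i\<in>UNIV. \<Sum>j\<in>UNIV. complex_of_real ((cmod (X$i$j))\<^sup>2))"
    by (simp add: norm_vec_def L2_set_def sum_nonneg)
  also have "\<dots> = (\<Sum>i\<in>UNIV. \<Sum>j\<in>UNIV. cnj (X$i$j) * X$i$j)"
    by (simp only: complex_norm_square mult.commute)
  also have "\<dots> = trace (cadj X ** X)"
    by (simp add: trace_def matrix_matrix_mult_def cadj_def) (rule sum.swap)
  finally show ?thesis .
qed

lemma norm_sandwich_unitary:
  assumes "unitary_mat Y" shows "norm (sandwich Y X) = norm X"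
proof -
  have "cadj (sandwich Y X) ** sandwich Y X = sandwich Y (cadj X ** X)"
    using assms unfolding sandwich_def cadj_mult unitary_mat_def
    by (simp add: matrix_mul_assoc) (metis matrix_mul_assoc matrix_mul_lid)
  then have "complex_of_real ((norm (sandwich Y X))\<^sup>2) = complex_of_real ((norm X)\<^sup>2)"
    using assms by (simp only: of_real_norm_square_matrix trace_sandwich_unitary)
  then show ?thesis by (simp only: of_real_eq_iff power2_eq_iff_nonneg norm_ge_zero)
qed

lemma commutant_iff_sandwich_fixed:
  assumes "\<forall>Y\<in>G. unitary_mat Y"
  shows "X \<in> commutant G \<longleftrightarrow> (\<forall>Y\<in>G. sandwich Y X = X)"
  unfolding commutant_def using assms sandwich_unitary_fixed_iff by blast

subsection \<open>Common fixed points of isometries\<close>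

lemma closed_convex_common_fixed_point:
  fixes C :: "'a::euclidean_space set"
  assumes "closed C" "convex C" "C \<noteq> {}"
    and "\<forall>f\<in>F. \<forall>x\<in>C. f x \<in> C \<and> norm (f x) = norm x"
  shows "\<exists>x\<in>C. \<forall>f\<in>F. f x = x"
proof -
  define x where "x = closest_point C 0"
  have xC: "x \<in> C"
    unfolding x_def by (rule closest_point_in_set[OF assms(1,3)])
  have xmin: "\<forall>y\<in>C. dist 0 x \<le> dist 0 y"
    unfolding x_def by (rule closest_point_exists(2)[OF assms(1,3)])
  have "f x = x" if "f \<in> F" for f
  proof -
    have "f x \<in> C" "\<forall>y\<in>C. dist 0 (f x) \<le> dist 0 y"
      using assms(4) that xC xmin by auto
    then show ?thesis
      unfolding x_def using closest_point_unique[OF assms(2,1)] by blast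
  qed
  then show ?thesis using xC by blast
qed

lemma sandwich_invariant_convex_meets_commutant:
  fixes C :: "(complex^'m^'m) set"
  assumes "closed C" "convex C" "C \<noteq> {}"
    and "\<forall>Y\<in>G. unitary_mat Y" "\<forall>Y\<in>G. \<forall>X\<in>C. sandwich Y X \<in> C"
  shows "C \<inter> commutant G \<noteq> {}"
proof -
  have "\<forall>f\<in>sandwich ` G. \<forall>X\<in>C. f X \<in> C \<and> norm (f X) = norm X"
    using assms(4,5) norm_sandwich_unitary by blast
  then obtain X where "X \<in> C" "\<forall>f\<in>sandwich ` G. f X = X"
    using closed_convex_common_fixed_point[OF assms(1-3)] by blast
  then show ?thesis using commutant_iff_sandwich_fixed[OF assms(4)] by auto
qed

lemma convex_linear_level_set: "linear f \<Longrightarrow> convex {x. f x = c}"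
  using convex_linear_vimage[of f "{c}"] by (simp add: vimage_def)

lemma linear_trace_mult: "linear (\<lambda>W. trace (W ** (\<rho> :: complex^'m^'m)))"
  by (rule linearI) (simp_all add: matrix_add_rdistrib trace_add trace_scaleR_left_mult)

definition witnesses :: "(complex^'m^'m) set \<Rightarrow> (complex^'m^'m) set" where
  "witnesses K = {W. hermitian W \<and> (\<forall>\<sigma>\<in>K. 0 \<le> trace (W ** \<sigma>))}"

lemma decomposition_in_commutant:
  fixes K :: "(complex^'m^'m) set"
  assumes K: "closed K" "convex K"
    and G: "\<forall>Y\<in>G. unitary_mat Y" "\<forall>Y\<in>G. \<forall>\<sigma>\<in>K. sandwich Y \<sigma> \<in> K"
    and \<rho>: "\<rho> \<in> commutant G" "\<rho> = ap *\<^sub>R \<sigma>p - an *\<^sub>R \<sigma>n" "\<sigma>p \<in> K" "\<sigma>n \<in> K"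
  shows "\<exists>\<sigma>p' \<sigma>n'. \<rho> = ap *\<^sub>R \<sigma>p' - an *\<^sub>R \<sigma>n'
           \<and> \<sigma>p' \<in> K \<inter> commutant G \<and> \<sigma>n' \<in> K \<inter> commutant G"
proof -
  define C where "C = (K \<times> K) \<inter> {p. ap *\<^sub>R fst p - an *\<^sub>R snd p = \<rho>}"
  define F where "F = (\<lambda>Y p. (sandwich Y (fst p), sandwich Y (snd p))) ` G"
  have "linear (\<lambda>p. ap *\<^sub>R fst p - an *\<^sub>R snd p :: complex^'m^'m)"
    by (rule linearI) (auto simp: algebra_simps)
  then have convex: "convex C"
    unfolding C_def by (intro convex_Int convex_Times K convex_linear_level_set)
  have closed: "closed C"
    unfolding C_def by (intro closed_Int closed_Times K closed_Collect_eq continuous_intros)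
  have nonempty: "C \<noteq> {}" using \<rho> unfolding C_def by auto
  have "\<forall>f\<in>F. \<forall>p\<in>C. f p \<in> C \<and> norm (f p) = norm p"
  proof (intro ballI)
    fix f p assume "f \<in> F" "p \<in> C"
    then obtain Y x y where Y: "Y \<in> G" "f p = (sandwich Y x, sandwich Y y)"
      and p: "p = (x, y)" "x \<in> K" "y \<in> K" "ap *\<^sub>R x - an *\<^sub>R y = \<rho>"
      unfolding F_def C_def by fastforce
    have "sandwich Y \<rho> = \<rho>"
      using \<rho>(1) Y(1) commutant_iff_sandwich_fixed[OF G(1)] by blast
    then have "ap *\<^sub>R sandwich Y x - an *\<^sub>R sandwich Y y = \<rho>"
      using p(4) by (simp flip: sandwich_scaleR sandwich_diff)
    then show "f p \<in> C \<and> norm (f p) = norm p"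
      using Y p G unfolding C_def by (simp add: norm_Pair norm_sandwich_unitary)
  qed
  then obtain p where p: "p \<in> C" "\<forall>f\<in>F. f p = p"
    using closed_convex_common_fixed_point[OF closed convex nonempty] by blast
  then have "sandwich Y (fst p) = fst p \<and> sandwich Y (snd p) = snd p" if "Y \<in> G" for Y
    using that unfolding F_def by (auto simp: prod_eq_iff)
  then have "fst p \<in> commutant G" "snd p \<in> commutant G"
    using commutant_iff_sandwich_fixed[OF G(1)] by blast+
  then show ?thesis using p(1) unfolding C_def by (intro exI[of _ "fst p"] exI[of _ "snd p"]) auto
qed

lemma decomposition_values_commutant:
  fixes K :: "(complex^'m^'m) set"
  assumes "closed K" "convex K"
    and "\<forall>Y\<in>G. unitary_mat Y" "\<forall>Y\<in>G. \<forall>\<sigma>\<in>K. sandwich Y \<sigma> \<in> K"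
    and "\<rho> \<in> commutant G"
  shows "{h ap an | ap an \<sigma>p \<sigma>n. \<rho> = ap *\<^sub>R \<sigma>p - an *\<^sub>R \<sigma>n \<and> ap \<ge> 0 \<and> an \<ge> 0
                                    \<and> \<sigma>p \<in> K \<and> \<sigma>n \<in> K}
      = {h ap an | ap an \<sigma>p \<sigma>n. \<rho> = ap *\<^sub>R \<sigma>p - an *\<^sub>R \<sigma>n \<and> ap \<ge> 0 \<and> an \<ge> 0
                                    \<and> \<sigma>p \<in> K \<inter> commutant G \<and> \<sigma>n \<in> K \<inter> commutant G}"
  using decomposition_in_commutant[OF assms] by blast

lemma closed_witnesses: "closed (witnesses K)"
proof -
  have "witnesses K = {W. cadj W = W} \<inter> (\<Inter>\<sigma>\<in>K. {W. 0 \<le> trace (W ** \<sigma>)})"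
    unfolding witnesses_def hermitian_def by auto
  then show ?thesis
    unfolding less_eq_complex_def trace_def
    by (simp only:) (intro closed_Int closed_INT ballI closed_Collect_conj closed_Collect_le
        closed_Collect_eq continuous_intros)
qed

lemma convex_witnesses: "convex (witnesses (K :: (complex^'m^'m) set))"
proof (rule convexI)
  fix X Y :: "complex^'m^'m" and u v :: real
  assume X: "X \<in> witnesses K" and Y: "Y \<in> witnesses K" and uv: "0 \<le> u" "0 \<le> v" "u + v = 1"
  have "trace ((u *\<^sub>R X + v *\<^sub>R Y) ** \<sigma>) = u *\<^sub>R trace (X ** \<sigma>) + v *\<^sub>R trace (Y ** \<sigma>)" for \<sigma>
    by (simp add: matrix_add_rdistrib trace_add trace_scaleR_left_mult)
  then show "u *\<^sub>R X + v *\<^sub>R Y \<in> witnesses K"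
    using X Y uv unfolding witnesses_def hermitian_def
    by (simp add: cadj_add cadj_scaleR scaleR_nonneg_nonneg)
qed

lemma inner_matrix_eq_trace: "inner a X = Re (trace (cadj a ** (X :: complex^'m^'m)))"
  unfolding inner_vec_def inner_complex_def trace_def matrix_matrix_mult_def cadj_def
  by simp (rule sum.swap)

text \<open>The real-linear functional \<open>\<langle>a, X\<rangle>\<close> is \<open>tr[H X]\<close> on Hermitian \<open>X\<close>, with \<open>H\<close> the Hermitian part of \<open>a\<close>.\<close>
lemma trace_hermitian_part_mult:
  fixes X :: "complex^'m^'m"
  assumes "hermitian X"
  shows "trace (((1/2) *\<^sub>R (cadj a + a)) ** X) = complex_of_real (inner a X)"
proof -
  have "cnj (X $ k $ i) = X $ i $ k" for i k
    using assms unfolding hermitian_def cadj_def by (metis vec_lambda_beta)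
  then have "trace (a ** X) = cnj (trace (cadj a ** X))"
    unfolding trace_def matrix_matrix_mult_def cadj_def by (simp add: mult.commute) (rule sum.swap)
  then show ?thesis
    by (simp add: trace_scaleR_left_mult matrix_add_rdistrib trace_add)
      (simp add: complex_add_cnj inner_matrix_eq_trace scaleR_conv_of_real)
qed

lemma witness_in_commutant:
  fixes K :: "(complex^'m^'m) set"
  assumes K: "closed K" "convex K" "\<forall>\<sigma>\<in>K. hermitian \<sigma> \<and> trace \<sigma> = 1"
    and G: "\<forall>Y\<in>G. unitary_mat Y" "\<forall>Y\<in>G. \<forall>\<sigma>\<in>K. sandwich (cadj Y) \<sigma> \<in> K"
    and \<rho>: "hermitian \<rho>" "trace \<rho> = 1" "\<rho> \<in> commutant G" "\<rho> \<notin> K"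
  shows "\<exists>W \<in> witnesses K \<inter> commutant G. \<not> 0 \<le> trace (W ** \<rho>)"
proof -
  obtain a b where ab: "inner a \<rho> < b" "\<forall>\<sigma>\<in>K. inner a \<sigma> > b"
    using separating_hyperplane_closed_point[OF K(2,1) \<rho>(4)] by blast
  define W0 where "W0 = (1/2) *\<^sub>R (cadj a + a) - b *\<^sub>R (mat 1 :: complex^'m^'m)"
  have trace_W0: "trace (W0 ** X) = complex_of_real (inner a X - b)"
    if "hermitian X" "trace X = 1" for X
    using that unfolding W0_def matrix_diff_rdistrib trace_sub trace_hermitian_part_mult[OF that(1)]
    by (simp add: trace_scaleR_left_mult) (simp add: scaleR_conv_of_real)
  have "hermitian W0"
    unfolding W0_def hermitian_def by (simp add: cadj_diff cadj_scaleR cadj_add add.commute)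
  with K(3) ab(2) trace_W0 have W0: "W0 \<in> witnesses K"
    unfolding witnesses_def by (fastforce simp: less_eq_complex_def)
  define C where "C = witnesses K \<inter> {W. trace (W ** \<rho>) = trace (W0 ** \<rho>)}"
  have "closed C"
    unfolding C_def trace_def
    by (intro closed_Int closed_witnesses closed_Collect_eq continuous_intros)
  moreover have "convex C"
    unfolding C_def by (intro convex_Int convex_witnesses convex_linear_level_set linear_trace_mult)
  moreover have "C \<noteq> {}" using W0 unfolding C_def by blast
  moreover have "\<forall>Y\<in>G. \<forall>W\<in>C. sandwich Y W \<in> C"
  proof (intro ballI)
    fix Y W assume Y: "Y \<in> G" and "W \<in> C"
    then have "W \<in> witnesses K" "trace (W ** \<rho>) = trace (W0 ** \<rho>)" unfolding C_def by auto
    moreover have "sandwich (cadj Y) \<rho> = \<rho>"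
      using \<rho>(3) Y G(1) commutant_iff_sandwich_fixed[OF G(1)] sandwich_cadj_fixed by blast
    ultimately show "sandwich Y W \<in> C"
      using Y G(2) unfolding C_def witnesses_def
      by (simp add: hermitian_sandwich trace_sandwich_mult)
  qed
  ultimately obtain W where W: "W \<in> C \<inter> commutant G"
    using sandwich_invariant_convex_meets_commutant[OF _ _ _ G(1)] by blast
  then have "trace (W ** \<rho>) = complex_of_real (inner a \<rho> - b)"
    using trace_W0[OF \<rho>(1,2)] unfolding C_def by simp
  then have "\<not> 0 \<le> trace (W ** \<rho>)"
    using ab(1) by (simp add: less_eq_complex_def)
  then show ?thesis
    using W unfolding C_def by blast
qed

definition Omega_rot :: "complex^'n^'n \<Rightarrow> complex^('n::finite \<times> 'n)^('n \<times> 'n)" where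
  "Omega_rot U = proj (kron (mat 1) U *v Omega)"

lemma Uset_eq_convex_hull_Omega_rot: "Uset = convex hull (Omega_rot ` {U. unitary_mat U})"
  unfolding Uset_def Omega_rot_def proj_matrix_vector_mult sandwich_def cadj_kron
  by (rule arg_cong[where f="\<lambda>S. convex hull S"]) auto

lemma sandwich_kron_Omega_rot:
  "sandwich (kron (cconj A) B) (Omega_rot U) = Omega_rot (B ** U ** cadj A)"
  unfolding Omega_rot_def
  by (simp flip: proj_matrix_vector_mult add: matrix_vector_mul_assoc kron_mult
      kron_cconj_mult_Omega)

lemma sandwich_kron_Uset:
  assumes "unitary_mat A" "unitary_mat B" "\<sigma> \<in> Uset"
  shows "sandwich (kron (cconj A) B) \<sigma> \<in> Uset"
proof -
  have "sandwich (kron (cconj A) B) ` (Omega_rot ` {U. unitary_mat U}) \<subseteq> Omega_rot ` {U. unitary_mat U}"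
    using assms by (auto simp: sandwich_kron_Omega_rot intro!: imageI unitary_mult unitary_cadj)
  then have "sandwich (kron (cconj A) B) ` Uset \<subseteq> Uset"
    unfolding Uset_eq_convex_hull_Omega_rot convex_hull_linear_image[OF linear_sandwich]
    by (rule hull_mono)
  then show ?thesis using assms(3) by blast
qed

lemma compact_unitary: "compact {U :: complex^'n^'n. unitary_mat U}"
proof (rule compact_eq_bounded_closed[THEN iffD2], rule conjI)
  have "norm U = sqrt (real CARD('n))" if "unitary_mat U" for U :: "complex^'n^'n"
  proof -
    have "complex_of_real ((norm U)\<^sup>2) = of_nat CARD('n)"
      using that unfolding of_real_norm_square_matrix unitary_mat_def by (simp add: trace_I)
    then have "(norm U)\<^sup>2 = real CARD('n)"
      by (metis of_real_eq_iff of_real_of_nat_eq)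
    then show ?thesis by (simp add: real_sqrt_unique)
  qed
  then show "bounded {U :: complex^'n^'n. unitary_mat U}"
    unfolding bounded_iff by (intro exI[of _ "sqrt (real CARD('n))"]) auto
  show "closed {U :: complex^'n^'n. unitary_mat U}"
    unfolding unitary_mat_def by (intro closed_Collect_conj closed_Collect_eq continuous_intros)
qed

lemma compact_Uset: "compact (Uset :: (complex^('n::finite \<times> 'n)^('n \<times> 'n)) set)"
proof -
  have "continuous_on UNIV (Omega_rot :: complex^'n^'n \<Rightarrow> _)"
    unfolding Omega_rot_def proj_matrix_vector_mult sandwich_def kron_def
    by (intro continuous_intros)
  then have "compact (Omega_rot ` {U :: complex^'n^'n. unitary_mat U})"
    using compact_continuous_image continuous_on_subset compact_unitary by blast
  then show ?thesis unfolding Uset_eq_convex_hull_Omega_rot by (rule compact_convex_hull)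
qed

lemma trace_proj_Omega: "trace (proj (Omega :: complex^('n::finite \<times> 'n))) = 1"
  unfolding trace_def proj_def Omega_def
  by (simp add: sum_UNIV_pair cnj_if_zero if_zero_mult flip: of_real_mult)

lemma Uset_hermitian_trace:
  fixes \<sigma> :: "complex^('n::finite \<times> 'n)^('n \<times> 'n)"
  assumes "\<sigma> \<in> Uset" shows "hermitian \<sigma> \<and> trace \<sigma> = 1"
proof -
  have "Omega_rot ` {U. unitary_mat U} \<subseteq> {X :: complex^('n \<times> 'n)^('n \<times> 'n). hermitian X \<and> trace X = 1}"
    by (auto simp: Omega_rot_def proj_matrix_vector_mult hermitian_sandwich hermitian_proj
        trace_sandwich_unitary unitary_kron unitary_mat1 trace_proj_Omega)
  moreover have "convex {X :: complex^('n \<times> 'n)^('n \<times> 'n). hermitian X \<and> trace X = 1}"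
    by (rule convexI) (simp add: hermitian_def cadj_add cadj_scaleR trace_add trace_scaleR
        flip: scaleR_add_left)
  ultimately show ?thesis
    using assms hull_minimal[where S=convex] unfolding Uset_eq_convex_hull_Omega_rot by blast
qed

lemma quadratic_form_two_points:
  fixes A :: "complex^'n^'n"
  assumes "i \<noteq> j" and x: "x = (\<chi> m. (if m = i then a else 0) + (if m = j then b else 0))"
  shows "(\<Sum>k\<in>UNIV. \<Sum>l\<in>UNIV. cnj (x $ k) * A $ k $ l * x $ l)
     = cnj a * a * A$i$i + cnj a * b * A$i$j + cnj b * a * A$j$i + cnj b * b * A$j$j"
proof -
  have "(\<Sum>l\<in>UNIV. A$k$l * x$l) = A$k$i * a + A$k$j * b" for k
    by (simp add: x distrib_left sum.distrib mult_if_zero)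
  then have "(\<Sum>k\<in>UNIV. \<Sum>l\<in>UNIV. cnj (x $ k) * A $ k $ l * x $ l)
      = (\<Sum>k\<in>UNIV. cnj (x $ k) * (A$k$i * a + A$k$j * b))"
    by (simp flip: sum_distrib_left add: mult.assoc)
  also have "\<dots> = cnj a * (A$i$i * a + A$i$j * b) + cnj b * (A$j$i * a + A$j$j * b)"
    using assms(1) by (simp add: x distrib_right sum.distrib if_zero_mult cnj_if_zero)
  finally show ?thesis by (simp add: algebra_simps)
qed

lemma quadratic_form_unit_vector:
  fixes A :: "complex^'n^'n"
  shows "(\<Sum>k\<in>UNIV. \<Sum>l\<in>UNIV. cnj ((\<chi> m. if m = i then 1 else 0) $ k) * A $ k $ l
            * (\<chi> m. if m = i then 1 else 0) $ l) = A$i$i"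
  by (simp add: if_zero_mult mult_if_zero cnj_if_zero)

text \<open>Complex polarization: the values of the form at \<open>e\<^sub>i\<close>, \<open>e\<^sub>i + e\<^sub>j\<close> and \<open>e\<^sub>i + \<i> e\<^sub>j\<close>
  being real already forces \<open>A\<^sub>j\<^sub>i = conj A\<^sub>i\<^sub>j\<close>.\<close>
lemma psd_imp_hermitian:
  fixes A :: "complex^'n^'n"
  assumes "psd A" shows "hermitian A"
proof -
  have real: "Im (\<Sum>k\<in>UNIV. \<Sum>l\<in>UNIV. cnj (x $ k) * A $ k $ l * x $ l) = 0" for x
    using assms unfolding psd_def by (simp add: less_eq_complex_def)
  have diag: "Im (A$i$i) = 0" for i
    using real[of "\<chi> m. if m = i then 1 else 0"] unfolding quadratic_form_unit_vector .
  have "cnj (A$j$i) = A$i$j" for i j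
  proof (cases "i = j")
    case True then show ?thesis using diag[of i] by (simp add: complex_eq_iff)
  next
    case False
    have "Im (A$i$j) + Im (A$j$i) = 0"
      using real[of "\<chi> m. (if m = i then 1 else 0) + (if m = j then 1 else 0)"] diag[of i] diag[of j]
      unfolding quadratic_form_two_points[OF False refl] by simp
    moreover have "Re (A$i$j) - Re (A$j$i) = 0"
      using real[of "\<chi> m. (if m = i then 1 else 0) + (if m = j then \<i> else 0)"] diag[of i] diag[of j]
      unfolding quadratic_form_two_points[OF False refl] by simp
    ultimately show ?thesis by (simp add: complex_eq_iff)
  qed
  then show ?thesis unfolding hermitian_def cadj_def by (simp add: vec_eq_iff)
qed

lemma trace_eq_1_if_ptr1:
  fixes \<rho> :: "complex^('n::finite \<times> 'n)^('n \<times> 'n)"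
  assumes "ptr1 \<rho> = mat (1 / of_nat CARD('n))"
  shows "trace \<rho> = 1"
proof -
  have "trace \<rho> = (\<Sum>j\<in>UNIV. \<Sum>i\<in>UNIV. \<rho> $ (i, j) $ (i, j))"
    unfolding trace_def sum_UNIV_pair by (rule sum.swap)
  also have "\<dots> = (\<Sum>j\<in>UNIV. ptr1 \<rho> $ j $ j)"
    by (simp add: ptr1_def)
  finally show ?thesis by (simp add: assms mat_def)
qed

lemma Sset_hermitian_trace: "\<rho> \<in> Sset \<Longrightarrow> hermitian \<rho> \<and> trace \<rho> = 1"
  unfolding Sset_def using psd_imp_hermitian trace_eq_1_if_ptr1 by blast

lemma Gset_local_unitary:
  assumes "unitary_rep T mul V" "unitary_rep T mul Vt" "Y \<in> Gset T V Vt"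
  obtains A B where "unitary_mat A" "unitary_mat B" "Y = kron (cconj A) B"
  using assms unfolding Gset_def unitary_rep_def by blast

lemma Gset_unitary:
  assumes "unitary_rep T mul V" "unitary_rep T mul Vt" "Y \<in> Gset T V Vt"
  shows "unitary_mat Y"
  using Gset_local_unitary[OF assms] unitary_kron unitary_cconj by metis

lemma Gset_sandwich_Uset:
  assumes "unitary_rep T mul V" "unitary_rep T mul Vt" "Y \<in> Gset T V Vt" "\<sigma> \<in> Uset"
  shows "sandwich Y \<sigma> \<in> Uset" "sandwich (cadj Y) \<sigma> \<in> Uset"
proof -
  obtain A B where AB: "unitary_mat A" "unitary_mat B" "Y = kron (cconj A) B"
    using Gset_local_unitary[OF assms(1-3)] .
  then show "sandwich Y \<sigma> \<in> Uset" using sandwich_kron_Uset assms(4) by blast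
  have "cadj Y = kron (cconj (cadj A)) (cadj B)" using AB(3) by (simp add: cadj_kron cadj_cconj)
  then show "sandwich (cadj Y) \<sigma> \<in> Uset"
    using sandwich_kron_Uset[OF unitary_cadj[OF AB(1)] unitary_cadj[OF AB(2)] assms(4)] by simp
qed

theorem proposition4:
  fixes T :: "'g topology" and mul :: "'g \<Rightarrow> 'g \<Rightarrow> 'g" and e :: 'g and ginv :: "'g \<Rightarrow> 'g"
    and V Vt :: "'g \<Rightarrow> complex^'n^'n"
    and \<rho> :: "complex^('n \<times> 'n)^('n \<times> 'n)"
  assumes "compact_group T mul e ginv"
    and "unitary_rep T mul V" and "unitary_rep T mul Vt"
    and "\<rho> \<in> Sset \<inter> commutant (Gset T V Vt)"
  shows "(\<rho> \<in> Uset \<longleftrightarrow> (\<forall>W \<in> Wset \<inter> commutant (Gset T V Vt). 0 \<le> trace (W ** \<rho>)))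
    \<and> Inf {ap + an | ap an \<sigma>p \<sigma>n. \<rho> = ap *\<^sub>R \<sigma>p - an *\<^sub>R \<sigma>n \<and> ap \<ge> 0 \<and> an \<ge> 0
                                    \<and> \<sigma>p \<in> Uset \<and> \<sigma>n \<in> Uset}
      = Inf {ap + an | ap an \<sigma>p \<sigma>n. \<rho> = ap *\<^sub>R \<sigma>p - an *\<^sub>R \<sigma>n \<and> ap \<ge> 0 \<and> an \<ge> 0
                                    \<and> \<sigma>p \<in> Uset \<inter> commutant (Gset T V Vt)
                                    \<and> \<sigma>n \<in> Uset \<inter> commutant (Gset T V Vt)}
    \<and> Inf {an | ap an \<sigma>p \<sigma>n. \<rho> = ap *\<^sub>R \<sigma>p - an *\<^sub>R \<sigma>n \<and> ap \<ge> 0 \<and> an \<ge> 0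
                                    \<and> \<sigma>p \<in> Uset \<and> \<sigma>n \<in> Uset}
      = Inf {an | ap an \<sigma>p \<sigma>n. \<rho> = ap *\<^sub>R \<sigma>p - an *\<^sub>R \<sigma>n \<and> ap \<ge> 0 \<and> an \<ge> 0
                                    \<and> \<sigma>p \<in> Uset \<inter> commutant (Gset T V Vt)
                                    \<and> \<sigma>n \<in> Uset \<inter> commutant (Gset T V Vt)}"
proof -
  let ?G = "Gset T V Vt"
  have \<rho>: "hermitian \<rho>" "trace \<rho> = 1" "\<rho> \<in> commutant ?G"
    using assms(4) Sset_hermitian_trace by auto
  have G: "\<forall>Y\<in>?G. unitary_mat Y" "\<forall>Y\<in>?G. \<forall>\<sigma>\<in>Uset. sandwich Y \<sigma> \<in> Uset"
    "\<forall>Y\<in>?G. \<forall>\<sigma>\<in>Uset. sandwich (cadj Y) \<sigma> \<in> Uset"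
    using Gset_unitary[OF assms(2,3)] Gset_sandwich_Uset[OF assms(2,3)] by blast+
  have U: "closed Uset" "convex Uset"
    by (simp_all add: compact_Uset compact_imp_closed) (simp add: Uset_def)
  have "Wset = witnesses Uset"
    unfolding Wset_def witnesses_def ..
  then have "\<rho> \<in> Uset \<longleftrightarrow> (\<forall>W \<in> Wset \<inter> commutant ?G. 0 \<le> trace (W ** \<rho>))"
    using witness_in_commutant[OF U ballI[OF Uset_hermitian_trace] G(1,3) \<rho>]
    unfolding witnesses_def by blast
  then show ?thesis
    using decomposition_values_commutant[OF U G(1,2) \<rho>(3), of "\<lambda>ap an. ap + an"]
      decomposition_values_commutant[OF U G(1,2) \<rho>(3), of "\<lambda>ap an. an"]
    by simp
qed

end
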